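(* For every constant $k$, the asymptotic approximation ratio achieved by any deterministic online width-$k$ algorithm for unweighted max-sat with input model 0 is strictly less than $2/3$.
   Context: Unweighted max-sat: the input is a set of clauses (sets of literals), each of weight 1; the goal is an assignment maximizing the number of satisfied clauses. Online: variables arrive one at a time in adversarial order and each must be irrevocably assigned upon arrival. In input model 0, the data item of a variable consists only of a list of names and weights of the clauses in which it appears positively and a list of names and weights of the clauses in which it appears negatively. Width-$k$ model: the algorithm maintains a tree of partial assignments with the empty assignment as root at level 0; when the $i$-th variable is processed, each node at level $i-1$ gets at least one child (no cutting allowed), each child extending its parent by a value for that variable; every level has at most $k$ nodes; at the end the best complete assignment is output. The asymptotic approximation ratio of $\mathbb{A}$ is $\liminf_{n}\inf_{I\in\mathcal{I}_n} v(\mathbb{A},I)/v(I)$, where $\mathcal{I}_n$ are the instances of size $n$. *)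

theory Defs
  imports Complex_Main "HOL-Library.Extended_Real" "HOL-Library.Liminf_Limsup"
begin

text \<open>A data item in input model 0 (unweighted, all weights 1): the set of names of the
  clauses in which the variable occurs positively, and the set of names of the clauses in
  which it occurs negatively. An instance is the list of data items in arrival order
  (the i-th variable is the i-th item); its size is the number of variables.\<close>

type_synonym item = "nat set \<times> nat set"

definition valid_instance :: "item list \<Rightarrow> bool" where
  "valid_instance ds \<longleftrightarrow>
     (\<forall>d \<in> set ds. finite (fst d) \<and> finite (snd d) \<and> fst d \<inter> snd d = {})"

text \<open>A deterministic online width-k algorithm: after seeing the first i data items it has
  the set of nodes (partial assignments of length i) at level i of its tree.\<close>

definition width_alg :: "nat \<Rightarrow> (item list \<Rightarrow> bool list set) \<Rightarrow> bool" where
  "width_alg k A \<longleftrightarrow>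
     A [] = {[]} \<and>
     (\<forall>ds. finite (A ds) \<and> card (A ds) \<le> k) \<and>
     (\<forall>ds d. A (ds @ [d]) \<subseteq> {ys @ [b] | ys b. ys \<in> A ds} \<and>
            (\<forall>ys \<in> A ds. \<exists>b. ys @ [b] \<in> A (ds @ [d])))"

definition sat_count :: "item list \<Rightarrow> bool list \<Rightarrow> nat" where
  "sat_count ds a = card {c. \<exists>i < length ds.
      (a ! i \<and> c \<in> fst (ds ! i)) \<or> (\<not> a ! i \<and> c \<in> snd (ds ! i))}"

definition alg_value :: "(item list \<Rightarrow> bool list set) \<Rightarrow> item list \<Rightarrow> nat" where
  "alg_value A ds = Max (sat_count ds ` A ds)"

definition opt_value :: "item list \<Rightarrow> nat" where
  "opt_value ds = Max (sat_count ds ` {a. length a = length ds})"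

definition ratio :: "(item list \<Rightarrow> bool list set) \<Rightarrow> item list \<Rightarrow> real" where
  "ratio A ds = (if opt_value ds = 0 then 1 else real (alg_value A ds) / real (opt_value ds))"

definition asymp_ratio :: "(item list \<Rightarrow> bool list set) \<Rightarrow> ereal" where
  "asymp_ratio A =
     liminf (\<lambda>n. INF ds \<in> {ds. valid_instance ds \<and> length ds = n}. ereal (ratio A ds))"

end

theory Submission
  imports Defs "HOL-Library.Disjoint_Sets"
begin

text \<open>The adversary maintains gadgets: pairs of clauses together with a level. A seed variable
  occurs positively in one clause of a new gadget and negatively in the other, so every node of
  the algorithm satisfies a clause of every gadget, while the adversary can still decide which of
  the two clauses the optimum gives up. Four gadgets of equal level on which all nodes behave alike
  are joined by two variables, one between the left clauses of two of them and one between the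
  right clauses of the other two, giving two gadgets of the next level. A gadget of level \<open>l\<close> is
  fully satisfied by at least \<open>l\<close> nodes, so levels stay below \<open>k\<close>; a gadget one of whose clauses
  every node satisfies is closed for free by a variable satisfying that clause for the optimum.
  Once no four gadgets behave alike, at most \<open>3 k 4\<^sup>k\<close> gadgets remain, and they are closed at the
  price of one clause each.

  After \<open>S\<close> seeds the optimum satisfies all \<open>2 S\<close> clauses, whereas every node keeps the potential
  "satisfied clauses plus \<open>credit k l\<close> per half-satisfied gadget of level \<open>l\<close>" below
  \<open>(1 + credit k 0) S\<close> plus the closing costs. Since \<open>credit k 0 < 1/3\<close>, the ratio is bounded away
  from \<open>2/3\<close> for large \<open>S\<close>, and padding with unused variables extends the bad instance to every
  larger size.\<close>

lemma card_ge_4_obtain_distinct: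
  assumes "4 \<le> card M"
  obtains a b c d where "{a, b, c, d} \<subseteq> M" "distinct [a, b, c, d]"
proof -
  obtain T where "T \<subseteq> M" "card T = 4" using obtain_subset_with_card_n[OF assms] by metis
  moreover from \<open>card T = 4\<close> obtain a b c d where "T = {a, b, c, d}" "distinct [a, b, c, d]"
    by (auto simp: card_Suc_eq numeral_eq_Suc)
  ultimately show thesis using that by blast
qed

lemma card_le_mult_card_image:
  assumes "finite P" and "\<And>x. x \<in> P \<Longrightarrow> card {y \<in> P. f y = f x} \<le> m"
  shows "card P \<le> m * card (f ` P)"
proof -
  have "card P = (\<Sum>z \<in> f ` P. card {y \<in> P. f y = z})"
    using sum.image_gen[OF assms(1), of "\<lambda>_. 1::nat" f] by (simp only: card_eq_sum)
  also have "\<dots> \<le> (\<Sum>z \<in> f ` P. m)"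
    using assms(2) by (intro sum_mono) auto
  finally show ?thesis by (simp add: mult.commute)
qed

lemma card_Diff_Un_less:
  assumes "finite G" and "Q \<subseteq> G" and "card N < card Q"
  shows "card (G - Q \<union> N) < card G"
proof -
  have "card (G - Q \<union> N) \<le> card (G - Q) + card N" by (rule card_Un_le)
  moreover have "finite Q" using assms(2,1) by (rule finite_subset)
  then have "card (G - Q) = card G - card Q" using assms(2) by (rule card_Diff_subset)
  moreover have "card Q \<le> card G" using assms(1,2) by (rule card_mono)
  ultimately show ?thesis using assms(3) by linarith
qed

lemma disjoint_family_on_replace:
  assumes "disjoint_family_on F G" and "H \<subseteq> G" and "disjoint_family_on F N"
    and "\<And>n. n \<in> N \<Longrightarrow> F n \<subseteq> (\<Union>h\<in>H. F h)"
  shows "disjoint_family_on F (G - H \<union> N)"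
proof -
  have kept_new: "F g \<inter> F n = {}" if "g \<in> G - H" "n \<in> N" for g n
  proof -
    have "F g \<inter> F h = {}" if "h \<in> H" for h
      using assms(1,2) \<open>g \<in> G - H\<close> that by (auto dest: disjoint_family_onD)
    then show ?thesis using assms(4)[OF \<open>n \<in> N\<close>] by blast
  qed
  show ?thesis
    unfolding disjoint_family_on_def
  proof (intro ballI impI)
    fix m n assume "m \<in> G - H \<union> N" "n \<in> G - H \<union> N" "m \<noteq> n"
    then consider "m \<in> G - H" "n \<in> G - H" | "m \<in> N" "n \<in> N" | "m \<in> G - H" "n \<in> N"
      | "m \<in> N" "n \<in> G - H" by blast
    then show "F m \<inter> F n = {}"
    proof cases
      case 1 then show ?thesis using assms(1) \<open>m \<noteq> n\<close> by (auto dest: disjoint_family_onD)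
    next
      case 2 then show ?thesis using assms(3) \<open>m \<noteq> n\<close> by (auto dest: disjoint_family_onD)
    next
      case 3 then show ?thesis by (rule kept_new)
    next
      case 4 then show ?thesis using kept_new by blast
    qed
  qed
qed

definition satisfied :: "item list \<Rightarrow> bool list \<Rightarrow> nat set" where
  "satisfied ds a = {c. \<exists>i < length ds.
      (a ! i \<and> c \<in> fst (ds ! i)) \<or> (\<not> a ! i \<and> c \<in> snd (ds ! i))}"

lemma sat_count_eq_card_satisfied: "sat_count ds a = card (satisfied ds a)"
  by (simp add: sat_count_def satisfied_def)

lemma satisfied_Nil [simp]: "satisfied [] a = {}"
  by (simp add: satisfied_def)

lemma satisfied_Cons [simp]:
  "satisfied (d # ds) (b # a) = (if b then fst d else snd d) \<union> satisfied ds a"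
  by (auto simp: satisfied_def less_Suc_eq_0_disj)

lemma satisfied_append:
  "length a = length ds \<Longrightarrow> satisfied (ds @ es) (a @ b) = satisfied ds a \<union> satisfied es b"
  by (induction a ds rule: list_induct2) auto

lemma satisfied_replicate_empty [simp]: "satisfied (replicate j ({}, {})) b = {}"
  by (simp add: satisfied_def)

lemma satisfied_subset:
  "\<forall>d\<in>set ds. fst d \<union> snd d \<subseteq> U \<Longrightarrow> satisfied ds a \<subseteq> U"
  by (fastforce simp: satisfied_def dest: nth_mem)

lemma finite_lists_of_length: "finite {a :: bool list. length a = n}"
  using finite_lists_length_eq[of "UNIV :: bool set" n] by simp

lemma sat_count_le_opt_value: "length \<sigma> = length ds \<Longrightarrow> sat_count ds \<sigma> \<le> opt_value ds"
  unfolding opt_value_def by (rule Max_ge) (use finite_lists_of_length in auto)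

lemma opt_value_attained: obtains \<sigma> where "length \<sigma> = length ds" "opt_value ds = sat_count ds \<sigma>"
proof -
  have "replicate (length ds) False \<in> {a. length a = length ds}" by simp
  then have "opt_value ds \<in> sat_count ds ` {a. length a = length ds}"
    unfolding opt_value_def by (intro Max_in) (use finite_lists_of_length in blast)+
  then show ?thesis using that by blast
qed

lemma opt_value_pad: "opt_value ds \<le> opt_value (ds @ replicate j ({}, {}))"
proof -
  obtain \<sigma> where \<sigma>: "length \<sigma> = length ds" "opt_value ds = sat_count ds \<sigma>"
    by (rule opt_value_attained)
  have "sat_count ds \<sigma> = sat_count (ds @ replicate j ({}, {})) (\<sigma> @ replicate j False)"
    by (simp add: sat_count_eq_card_satisfied satisfied_append \<sigma>(1))
  also have "\<dots> \<le> opt_value (ds @ replicate j ({}, {}))"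
    by (rule sat_count_le_opt_value) (simp add: \<sigma>(1))
  finally show ?thesis using \<sigma>(2) by simp
qed

locale width_algorithm =
  fixes k :: nat and A :: "item list \<Rightarrow> bool list set"
  assumes width_alg: "width_alg k A"
begin

lemma nodes_Nil: "A [] = {[]}"
  using width_alg by (simp add: width_alg_def)

lemma finite_nodes: "finite (A ds)"
  using width_alg by (simp add: width_alg_def)

lemma card_nodes_le: "card (A ds) \<le> k"
  using width_alg by (simp add: width_alg_def)

lemma node_snoc_prefix: "a' \<in> A (ds @ [d]) \<Longrightarrow> \<exists>a b. a' = a @ [b] \<and> a \<in> A ds"
  using width_alg unfolding width_alg_def by blast

lemma node_snoc_child: "a \<in> A ds \<Longrightarrow> \<exists>b. a @ [b] \<in> A (ds @ [d])"
  using width_alg unfolding width_alg_def by blast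

lemma node_append_prefix:
  "a' \<in> A (ds @ es) \<Longrightarrow> \<exists>a b. a' = a @ b \<and> a \<in> A ds \<and> length b = length es"
proof (induction es arbitrary: a' rule: rev_induct)
  case (snoc e es)
  then obtain a'' c where "a' = a'' @ [c]" "a'' \<in> A (ds @ es)"
    using node_snoc_prefix[of a' "ds @ es" e] by auto
  with snoc.IH show ?case by fastforce
qed simp

lemma node_append_child: "a \<in> A ds \<Longrightarrow> \<exists>b. a @ b \<in> A (ds @ es)"
proof (induction es rule: rev_induct)
  case (snoc e es)
  then obtain b where "a @ b \<in> A (ds @ es)" by blast
  then obtain c where "(a @ b) @ [c] \<in> A ((ds @ es) @ [e])" using node_snoc_child by blast
  then show ?case by auto
qed (use append_Nil2 in metis)

lemma length_node: "a \<in> A ds \<Longrightarrow> length a = length ds"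
  using node_append_prefix[of a "[]" ds] nodes_Nil by auto

lemma nodes_nonempty: "A ds \<noteq> {}"
  using node_append_child[of "[]" "[]" ds] nodes_Nil by auto

lemma width_pos: "0 < k"
  using card_nodes_le[of "[]"] nodes_Nil by simp

lemma node_append_cases:
  assumes "a' \<in> A (ds @ es)"
  obtains a b where "a' = a @ b" "a \<in> A ds" "length b = length es"
    "satisfied (ds @ es) a' = satisfied ds a \<union> satisfied es b"
proof -
  obtain a b where "a' = a @ b" "a \<in> A ds" "length b = length es"
    using node_append_prefix[OF assms] by blast
  moreover from this have "satisfied (ds @ es) a' = satisfied ds a \<union> satisfied es b"
    by (simp add: satisfied_append length_node)
  ultimately show thesis by (rule that)
qed

lemma card_nodes_le_card_extensions:
  assumes "\<And>a b. a \<in> A ds \<Longrightarrow> P a \<Longrightarrow> a @ b \<in> A (ds @ es) \<Longrightarrow> Q (a @ b)"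
  shows "card {a \<in> A ds. P a} \<le> card {a' \<in> A (ds @ es). Q a'}"
proof -
  let ?Q = "{a' \<in> A (ds @ es). Q a'}"
  have fin: "finite ?Q" using finite_nodes by simp
  have "{a \<in> A ds. P a} \<subseteq> take (length ds) ` ?Q"
  proof
    fix a assume a: "a \<in> {a \<in> A ds. P a}"
    then obtain b where "a @ b \<in> A (ds @ es)" using node_append_child by blast
    with a assms have "a @ b \<in> ?Q" by blast
    moreover have "take (length ds) (a @ b) = a" using a length_node[of a ds] by simp
    ultimately show "a \<in> take (length ds) ` ?Q" by (metis image_eqI)
  qed
  then have "card {a \<in> A ds. P a} \<le> card (take (length ds) ` ?Q)"
    using fin by (simp add: card_mono)
  also have "\<dots> \<le> card ?Q" using fin by (rule card_image_le)
  finally show ?thesis .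
qed

lemma card_nodes_satisfying_mono:
  "card {a \<in> A ds. C \<subseteq> satisfied ds a} \<le> card {a' \<in> A (ds @ es). C \<subseteq> satisfied (ds @ es) a'}"
proof (rule card_nodes_le_card_extensions)
  fix a b assume "a \<in> A ds" "C \<subseteq> satisfied ds a"
  then show "C \<subseteq> satisfied (ds @ es) (a @ b)" using satisfied_append[OF length_node] by blast
qed

lemma alg_value_attained: obtains a where "a \<in> A ds" "alg_value A ds = sat_count ds a"
proof -
  have "alg_value A ds \<in> sat_count ds ` A ds"
    unfolding alg_value_def by (rule Max_in) (simp_all add: finite_nodes nodes_nonempty)
  then show ?thesis using that by blast
qed

lemma sat_count_le_alg_value: "a \<in> A ds \<Longrightarrow> sat_count ds a \<le> alg_value A ds"
  unfolding alg_value_def by (simp add: finite_nodes)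

lemma alg_value_pad: "alg_value A (ds @ replicate j ({}, {})) \<le> alg_value A ds"
proof -
  let ?ds' = "ds @ replicate j ({}, {})"
  obtain a' where a': "a' \<in> A ?ds'" "alg_value A ?ds' = sat_count ?ds' a'"
    by (rule alg_value_attained)
  obtain a b where "a \<in> A ds" "satisfied ?ds' a' = satisfied ds a \<union> satisfied (replicate j ({}, {})) b"
    by (rule node_append_cases[OF a'(1)])
  then have "alg_value A ?ds' = sat_count ds a"
    using a'(2) by (simp add: sat_count_eq_card_satisfied)
  also have "\<dots> \<le> alg_value A ds" using \<open>a \<in> A ds\<close> by (rule sat_count_le_alg_value)
  finally show ?thesis .
qed

lemma ratio_pad_le:
  assumes "0 < opt_value ds"
  shows "ratio A (ds @ replicate j ({}, {})) \<le> ratio A ds"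
proof -
  let ?ds' = "ds @ replicate j ({}, {})"
  have "0 < opt_value ?ds'" using assms opt_value_pad[of ds j] by linarith
  then have "ratio A ?ds' = alg_value A ?ds' / opt_value ?ds'" by (simp add: ratio_def)
  also have "\<dots> \<le> alg_value A ds / opt_value ds"
    by (rule frac_le) (use assms alg_value_pad opt_value_pad in simp_all)
  also have "\<dots> = ratio A ds" using assms by (simp add: ratio_def)
  finally show ?thesis .
qed

text \<open>Padding with variables that occur in no clause cannot increase the ratio, so a bad
  instance of one size yields bad instances of every larger size.\<close>

lemma asymp_ratio_le_ratio:
  assumes "valid_instance ds" and "0 < opt_value ds"
  shows "asymp_ratio A \<le> ereal (ratio A ds)"
proof -
  have "eventually (\<lambda>n. (INF ds' \<in> {ds'. valid_instance ds' \<and> length ds' = n}.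
      ereal (ratio A ds')) \<le> ereal (ratio A ds)) sequentially"
    unfolding eventually_sequentially
  proof (intro exI allI impI)
    fix n assume "length ds \<le> n"
    then have "ds @ replicate (n - length ds) ({}, {}) \<in> {ds'. valid_instance ds' \<and> length ds' = n}"
      using assms(1) by (auto simp: valid_instance_def)
    then have "(INF ds' \<in> {ds'. valid_instance ds' \<and> length ds' = n}. ereal (ratio A ds'))
        \<le> ereal (ratio A (ds @ replicate (n - length ds) ({}, {})))"
      by (rule INF_lower)
    also have "\<dots> \<le> ereal (ratio A ds)" using ratio_pad_le[OF assms(2)] by simp
    finally show "(INF ds' \<in> {ds'. valid_instance ds' \<and> length ds' = n}. ereal (ratio A ds'))
        \<le> ereal (ratio A ds)" .
  qed
  then have "asymp_ratio A \<le> liminf (\<lambda>_. ereal (ratio A ds))"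
    unfolding asymp_ratio_def by (rule Liminf_mono)
  then show ?thesis by (simp add: Liminf_const)
qed

end

section \<open>Gadgets and the adversary invariant\<close>

datatype gadget = Gadget (level: nat) (left: nat) (right: nat)

definition clauses :: "gadget \<Rightarrow> nat set" where
  [simp]: "clauses g = {left g, right g}"

definition side :: "(gadget \<Rightarrow> bool) \<Rightarrow> gadget \<Rightarrow> nat" where
  "side f g = (if f g then left g else right g)"

abbreviation pair_item :: "gadget \<Rightarrow> item" where
  "pair_item g \<equiv> ({left g}, {right g})"

abbreviation seed_gadget :: "nat \<Rightarrow> gadget" where
  "seed_gadget S \<equiv> Gadget 0 (2 * S) (Suc (2 * S))"

abbreviation join_left :: "gadget \<Rightarrow> gadget \<Rightarrow> gadget" where
  "join_left g h \<equiv> Gadget (Suc (level g)) (left g) (left h)"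

abbreviation join_right :: "gadget \<Rightarrow> gadget \<Rightarrow> gadget" where
  "join_right g h \<equiv> Gadget (Suc (level g)) (right g) (right h)"

abbreviation join_items :: "gadget \<Rightarrow> gadget \<Rightarrow> gadget \<Rightarrow> gadget \<Rightarrow> item list" where
  "join_items o1 o2 o3 o4 \<equiv> [pair_item (join_left o1 o2), pair_item (join_right o3 o4)]"

text \<open>The solution of \<open>4 c(l) = 1 + c(l + 1)\<close>, \<open>c(k) = 0\<close>: joining four half-satisfied gadgets of
  level \<open>l\<close> trades their credit for one newly satisfied clause and one half-satisfied gadget of
  level \<open>l + 1\<close>.\<close>

definition credit :: "nat \<Rightarrow> nat \<Rightarrow> real" where
  "credit k l = (1 - 1 / 4 ^ (k - l)) / 3"

lemma credit_nonneg: "0 \<le> credit k l"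
  by (simp add: credit_def)

lemma credit_Suc:
  assumes "l < k" shows "4 * credit k l = 1 + credit k (Suc l)"
proof -
  have "k - l = Suc (k - Suc l)" using assms by simp
  then show ?thesis by (simp add: credit_def field_simps)
qed

definition gadget_credit :: "nat \<Rightarrow> nat set \<Rightarrow> gadget \<Rightarrow> real" where
  "gadget_credit k C g = (if (left g \<in> C) \<noteq> (right g \<in> C) then credit k (level g) else 0)"

definition potential :: "nat \<Rightarrow> nat set \<Rightarrow> gadget set \<Rightarrow> real" where
  "potential k C G = card C + (\<Sum>g\<in>G. gadget_credit k C g)"

lemma gadget_credit_nonneg: "0 \<le> gadget_credit k C g"
  by (simp add: gadget_credit_def credit_nonneg)

lemma sum_gadget_credit_fresh:
  "\<forall>g\<in>G. clauses g \<inter> Y = {} \<Longrightarrow>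
    (\<Sum>g\<in>G. gadget_credit k (C \<union> Y) g) = (\<Sum>g\<in>G. gadget_credit k C g)"
  by (intro sum.cong) (auto simp: gadget_credit_def)

definition well_formed :: "nat \<Rightarrow> item list \<Rightarrow> gadget set \<Rightarrow> bool" where
  "well_formed S ds G \<longleftrightarrow>
     (\<forall>d\<in>set ds. fst d \<union> snd d \<subseteq> {..<2*S} \<and> fst d \<inter> snd d = {}) \<and>
     finite G \<and> (\<forall>g\<in>G. clauses g \<subseteq> {..<2*S}) \<and> disjoint_family_on clauses G"

text \<open>\<open>side f g\<close> is the clause of \<open>g\<close> that the optimum gives up under the choice \<open>f\<close>.\<close>

definition optimum_witness :: "nat \<Rightarrow> item list \<Rightarrow> gadget set \<Rightarrow> bool" where
  "optimum_witness S ds G \<longleftrightarrow>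
     (\<forall>f. \<exists>\<sigma>. length \<sigma> = length ds \<and> {..<2*S} - side f ` G \<subseteq> satisfied ds \<sigma>)"

lemma well_formed_satisfied: "well_formed S ds G \<Longrightarrow> satisfied ds a \<subseteq> {..<2*S}"
  unfolding well_formed_def by (intro satisfied_subset) blast

lemma well_formed_valid_instance: "well_formed S ds G \<Longrightarrow> valid_instance ds"
  unfolding well_formed_def valid_instance_def by (meson finite_Un finite_lessThan finite_subset)

lemma well_formed_seed:
  assumes "well_formed S ds G"
  shows "well_formed (Suc S) (ds @ [pair_item (seed_gadget S)]) (insert (seed_gadget S) G)"
proof -
  have "\<forall>g\<in>G. clauses g \<subseteq> {..<2*S}" using assms by (simp add: well_formed_def)
  then have "seed_gadget S \<notin> G" and "clauses (seed_gadget S) \<inter> (\<Union>g\<in>G. clauses g) = {}"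
    by fastforce+
  with assms show ?thesis
    unfolding well_formed_def by (auto simp: disjoint_family_on_insert) fastforce+
qed

lemma optimum_witness_seed:
  assumes "optimum_witness S ds G"
  shows "optimum_witness (Suc S) (ds @ [pair_item (seed_gadget S)]) (insert (seed_gadget S) G)"
  unfolding optimum_witness_def
proof
  fix f
  obtain \<sigma> where \<sigma>: "length \<sigma> = length ds" "{..<2*S} - side f ` G \<subseteq> satisfied ds \<sigma>"
    using assms unfolding optimum_witness_def by blast
  let ?\<sigma>' = "\<sigma> @ [\<not> f (seed_gadget S)]"
  have "{..<2 * Suc S} - side f ` insert (seed_gadget S) G
      \<subseteq> satisfied (ds @ [pair_item (seed_gadget S)]) ?\<sigma>'"
    using \<sigma> by (auto simp: satisfied_append side_def less_Suc_eq)
  then show "\<exists>\<sigma>'. length \<sigma>' = length (ds @ [pair_item (seed_gadget S)]) \<and>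
      {..<2 * Suc S} - side f ` insert (seed_gadget S) G
        \<subseteq> satisfied (ds @ [pair_item (seed_gadget S)]) \<sigma>'"
    using \<sigma>(1) by (intro exI[of _ ?\<sigma>']) simp
qed

context width_algorithm
begin

definition nodes_hit :: "item list \<Rightarrow> gadget set \<Rightarrow> bool" where
  "nodes_hit ds G \<longleftrightarrow> (\<forall>a\<in>A ds. \<forall>g\<in>G. clauses g \<inter> satisfied ds a \<noteq> {})"

definition levels_supported :: "item list \<Rightarrow> gadget set \<Rightarrow> bool" where
  "levels_supported ds G \<longleftrightarrow>
     (\<forall>g\<in>G. level g \<le> card {a \<in> A ds. clauses g \<subseteq> satisfied ds a})"

definition potential_bounded :: "item list \<Rightarrow> gadget set \<Rightarrow> nat \<Rightarrow> nat \<Rightarrow> bool" where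
  "potential_bounded ds G S X \<longleftrightarrow>
     (\<forall>a\<in>A ds. potential k (satisfied ds a) G \<le> (1 + credit k 0) * S + X)"

text \<open>\<open>S\<close> seeds have been played, using the clause names below \<open>2 S\<close>, and \<open>X\<close> clauses have been
  conceded to the algorithm by closing gadgets.\<close>

definition adversary_state :: "item list \<Rightarrow> gadget set \<Rightarrow> nat \<Rightarrow> nat \<Rightarrow> bool" where
  "adversary_state ds G S X \<longleftrightarrow> well_formed S ds G \<and> optimum_witness S ds G \<and>
     nodes_hit ds G \<and> levels_supported ds G \<and> potential_bounded ds G S X"

lemma nodes_hit_Un: "nodes_hit ds (G \<union> H) \<longleftrightarrow> nodes_hit ds G \<and> nodes_hit ds H"
  by (auto simp: nodes_hit_def)

lemma nodes_hit_append:
  assumes "nodes_hit ds G" and "G' \<subseteq> G"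
  shows "nodes_hit (ds @ es) G'"
  unfolding nodes_hit_def
proof (intro ballI)
  fix a' g assume "a' \<in> A (ds @ es)" "g \<in> G'"
  then obtain a b where "a \<in> A ds" "satisfied (ds @ es) a' = satisfied ds a \<union> satisfied es b"
    by (elim node_append_cases)
  with assms \<open>g \<in> G'\<close> show "clauses g \<inter> satisfied (ds @ es) a' \<noteq> {}"
    unfolding nodes_hit_def by blast
qed

lemma nodes_hit_pair_item:
  assumes "pair_item g \<in> set es"
  shows "nodes_hit (ds @ es) {g}"
  unfolding nodes_hit_def
proof (intro ballI)
  fix a' g' assume "a' \<in> A (ds @ es)" "g' \<in> {g}"
  then obtain a b where sat: "satisfied (ds @ es) a' = satisfied ds a \<union> satisfied es b" and "g' = g"
    by (auto elim: node_append_cases)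
  obtain i where "i < length es" "es ! i = pair_item g" using assms by (auto simp: in_set_conv_nth)
  then have "left g \<in> satisfied es b \<or> right g \<in> satisfied es b"
    unfolding satisfied_def by (cases "b ! i") auto
  then show "clauses g' \<inter> satisfied (ds @ es) a' \<noteq> {}" using sat \<open>g' = g\<close> by auto
qed

lemma levels_supported_append:
  "levels_supported ds G \<Longrightarrow> G' \<subseteq> G \<Longrightarrow> levels_supported (ds @ es) G'"
  unfolding levels_supported_def using card_nodes_satisfying_mono by (meson le_trans subsetD)

lemma potential_bounded_seed:
  assumes "well_formed S ds G" and "potential_bounded ds G S X"
  shows "potential_bounded (ds @ [pair_item (seed_gadget S)]) (insert (seed_gadget S) G) (Suc S) X"
  unfolding potential_bounded_def
proof
  fix a' assume "a' \<in> A (ds @ [pair_item (seed_gadget S)])"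
  then obtain a b where a: "a \<in> A ds" and "length b = 1" and
    sat: "satisfied (ds @ [pair_item (seed_gadget S)]) a' = satisfied ds a \<union> satisfied [pair_item (seed_gadget S)] b"
    by (elim node_append_cases) simp
  then obtain x where "b = [x]" by (metis One_nat_def length_0_conv length_Suc_conv)
  let ?C = "satisfied ds a" and ?y = "if x then 2 * S else Suc (2 * S)"
  have new: "satisfied (ds @ [pair_item (seed_gadget S)]) a' = ?C \<union> {?y}"
    using sat \<open>b = [x]\<close> by simp
  have C: "?C \<subseteq> {..<2*S}" using well_formed_satisfied[OF assms(1)] .
  then have "finite ?C" "?y \<notin> ?C" by (auto intro: finite_subset)
  moreover have "\<forall>g\<in>G. clauses g \<inter> {?y} = {}" using assms(1) by (auto simp: well_formed_def)
  moreover have "seed_gadget S \<notin> G" using assms(1) by (auto simp: well_formed_def)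
  moreover have "gadget_credit k (?C \<union> {?y}) (seed_gadget S) = credit k 0"
    using C by (auto simp: gadget_credit_def)
  moreover have "finite G" using assms(1) by (simp add: well_formed_def)
  ultimately have "potential k (?C \<union> {?y}) (insert (seed_gadget S) G) = potential k ?C G + 1 + credit k 0"
    unfolding potential_def using sum_gadget_credit_fresh[of G "{?y}" k ?C] by simp
  moreover have "potential k ?C G \<le> (1 + credit k 0) * S + X"
    using assms(2) a by (simp add: potential_bounded_def)
  ultimately show "potential k (satisfied (ds @ [pair_item (seed_gadget S)]) a') (insert (seed_gadget S) G)
      \<le> (1 + credit k 0) * Suc S + X"
    unfolding new by (simp add: algebra_simps)
qed

lemma adversary_state_seed:
  assumes "adversary_state ds G S X"
  shows "adversary_state (ds @ [pair_item (seed_gadget S)]) (insert (seed_gadget S) G) (Suc S) X"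
proof -
  let ?g = "seed_gadget S"
  from assms have wf: "well_formed S ds G" and witness: "optimum_witness S ds G"
    and hit: "nodes_hit ds G" and levels: "levels_supported ds G" and pot: "potential_bounded ds G S X"
    unfolding adversary_state_def by auto
  have "nodes_hit (ds @ [pair_item ?g]) ({?g} \<union> G)"
    using nodes_hit_append[OF hit order_refl] nodes_hit_pair_item[of ?g "[pair_item ?g]" ds]
    by (simp only: nodes_hit_Un) simp
  moreover have "levels_supported (ds @ [pair_item ?g]) (insert ?g G)"
    using levels_supported_append[OF levels order_refl, of "[pair_item ?g]"]
    by (simp add: levels_supported_def)
  ultimately show ?thesis
    using well_formed_seed[OF wf] optimum_witness_seed[OF witness] potential_bounded_seed[OF wf pot]
    by (simp add: adversary_state_def)
qed

lemma adversary_state_seeds: "\<exists>ds G. adversary_state ds G S 0"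
proof (induction S)
  case 0
  have "adversary_state [] {} 0 0"
    by (simp add: adversary_state_def well_formed_def disjoint_family_on_def optimum_witness_def nodes_hit_def
        levels_supported_def potential_bounded_def potential_def nodes_Nil)
  then show ?case by blast
next
  case (Suc S)
  then show ?case using adversary_state_seed by blast
qed

lemma well_formed_close:
  assumes "well_formed S ds G" and "g \<in> G" and "x \<in> clauses g"
  shows "well_formed S (ds @ [({x}, {})]) (G - {g})"
  using assms unfolding well_formed_def by (auto intro: disjoint_family_on_mono)

lemma optimum_witness_close:
  assumes "optimum_witness S ds G" and "x \<in> clauses g"
  shows "optimum_witness S (ds @ [({x}, {})]) (G - {g})"
  unfolding optimum_witness_def
proof
  fix f
  let ?f = "f(g := x = left g)"
  obtain \<sigma> where \<sigma>: "length \<sigma> = length ds" "{..<2*S} - side ?f ` G \<subseteq> satisfied ds \<sigma>"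
    using assms(1) unfolding optimum_witness_def by blast
  have "side ?f ` G \<subseteq> insert x (side f ` (G - {g}))"
    using assms(2) by (auto simp: side_def)
  then have "{..<2*S} - side f ` (G - {g}) \<subseteq> insert x ({..<2*S} - side ?f ` G)"
    by blast
  also have "\<dots> \<subseteq> satisfied (ds @ [({x}, {})]) (\<sigma> @ [True])"
    using \<sigma> by (auto simp: satisfied_append)
  finally have "{..<2*S} - side f ` (G - {g}) \<subseteq> satisfied (ds @ [({x}, {})]) (\<sigma> @ [True])" .
  then show "\<exists>\<sigma>'. length \<sigma>' = length (ds @ [({x}, {})]) \<and>
      {..<2*S} - side f ` (G - {g}) \<subseteq> satisfied (ds @ [({x}, {})]) \<sigma>'"
    using \<sigma>(1) by (intro exI[of _ "\<sigma> @ [True]"]) simp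
qed

lemma potential_bounded_close:
  assumes wf: "well_formed S ds G" and g: "g \<in> G" "x \<in> clauses g"
    and pot: "potential_bounded ds G S X"
    and paid: "X \<le> X'" "(\<forall>a\<in>A ds. x \<in> satisfied ds a) \<or> X < X'"
  shows "potential_bounded (ds @ [({x}, {})]) (G - {g}) S X'"
  unfolding potential_bounded_def
proof
  fix a' assume "a' \<in> A (ds @ [({x}, {})])"
  then obtain a b where a: "a \<in> A ds" and "length b = 1" and
    sat: "satisfied (ds @ [({x}, {})]) a' = satisfied ds a \<union> satisfied [({x}, {})] b"
    by (elim node_append_cases) simp
  then obtain y where "b = [y]" by (metis One_nat_def length_0_conv length_Suc_conv)
  let ?C = "satisfied ds a" and ?Y = "if y then {x} else {}"
  have new: "satisfied (ds @ [({x}, {})]) a' = ?C \<union> ?Y" using sat \<open>b = [y]\<close> by simp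
  have fin: "finite ?C" "finite G" using wf well_formed_satisfied[OF wf]
    by (auto simp: well_formed_def intro: finite_subset)
  have "\<forall>h\<in>G - {g}. clauses h \<inter> ?Y = {}"
    using wf g by (auto simp: well_formed_def dest: disjoint_family_onD)
  then have "(\<Sum>h\<in>G - {g}. gadget_credit k (?C \<union> ?Y) h) = (\<Sum>h\<in>G - {g}. gadget_credit k ?C h)"
    by (rule sum_gadget_credit_fresh)
  also have "\<dots> \<le> (\<Sum>h\<in>G. gadget_credit k ?C h)"
    using fin(2) g(1) by (intro sum_mono2) (auto simp: gadget_credit_nonneg)
  finally have credits: "(\<Sum>h\<in>G - {g}. gadget_credit k (?C \<union> ?Y) h) \<le> (\<Sum>h\<in>G. gadget_credit k ?C h)" .
  have "real (card (?C \<union> ?Y)) \<le> card ?C + (real X' - X)"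
  proof (cases "x \<in> ?C \<or> \<not> y")
    case True
    then show ?thesis using paid(1) by (auto simp: insert_absorb)
  next
    case False
    then have "X < X'" using paid(2) a by blast
    with False fin(1) show ?thesis by simp
  qed
  with credits have "potential k (?C \<union> ?Y) (G - {g}) \<le> potential k ?C G + (real X' - X)"
    unfolding potential_def by linarith
  moreover have "potential k ?C G \<le> (1 + credit k 0) * S + X"
    using pot a by (simp add: potential_bounded_def)
  ultimately show "potential k (satisfied (ds @ [({x}, {})]) a') (G - {g}) \<le> (1 + credit k 0) * S + X'"
    unfolding new by linarith
qed

lemma adversary_state_close:
  assumes "adversary_state ds G S X" and "g \<in> G" and "x \<in> clauses g"
    and "X \<le> X'" and "(\<forall>a\<in>A ds. x \<in> satisfied ds a) \<or> X < X'"
  shows "adversary_state (ds @ [({x}, {})]) (G - {g}) S X'"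
proof -
  from assms(1) have wf: "well_formed S ds G" and witness: "optimum_witness S ds G"
    and hit: "nodes_hit ds G" and levels: "levels_supported ds G" and pot: "potential_bounded ds G S X"
    unfolding adversary_state_def by auto
  show ?thesis
    unfolding adversary_state_def
    using well_formed_close[OF wf assms(2,3)] optimum_witness_close[OF witness assms(3)]
      nodes_hit_append[OF hit Diff_subset] levels_supported_append[OF levels Diff_subset]
      potential_bounded_close[OF wf assms(2,3) pot assms(4,5)]
    by blast
qed

lemma adversary_state_close_all:
  "adversary_state ds G S X \<Longrightarrow> \<exists>ds'. adversary_state ds' {} S (X + card G)"
proof (induction "card G" arbitrary: ds G X)
  case 0
  then have "G = {}" by (simp add: adversary_state_def well_formed_def)
  with 0 show ?case by auto
next
  case (Suc n)
  then have "G \<noteq> {}" by auto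
  then obtain g where g: "g \<in> G" by blast
  have "finite G" using Suc.prems by (simp add: adversary_state_def well_formed_def)
  have "adversary_state (ds @ [({left g}, {})]) (G - {g}) S (Suc X)"
    using adversary_state_close[OF Suc.prems g] by simp
  moreover have "n = card (G - {g})" using Suc.hyps(2) g \<open>finite G\<close> by simp
  ultimately show ?case using Suc.hyps(1) g \<open>finite G\<close> Suc.hyps(2) by fastforce
qed

definition profile :: "item list \<Rightarrow> gadget \<Rightarrow> nat \<times> bool list set \<times> bool list set" where
  "profile ds g = (level g, {a \<in> A ds. left g \<in> satisfied ds a}, {a \<in> A ds. right g \<in> satisfied ds a})"

definition unanimous :: "item list \<Rightarrow> gadget \<Rightarrow> bool" where
  "unanimous ds g \<longleftrightarrow> (\<forall>a\<in>A ds. left g \<in> satisfied ds a) \<or> (\<forall>a\<in>A ds. right g \<in> satisfied ds a)"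

lemma profile_eqD:
  assumes "profile ds h = profile ds g" and "a \<in> A ds"
  shows "level h = level g" "left h \<in> satisfied ds a \<longleftrightarrow> left g \<in> satisfied ds a"
    "right h \<in> satisfied ds a \<longleftrightarrow> right g \<in> satisfied ds a"
  using assms by (auto simp: profile_def set_eq_iff)

lemma level_lt_card_nodes_satisfying:
  assumes "nodes_hit ds G" "levels_supported ds G" "g \<in> G" "clauses g = {x, y}"
    and "a \<in> A ds" "y \<notin> satisfied ds a"
  shows "level g < card {a \<in> A ds. x \<in> satisfied ds a}"
proof -
  have "clauses g \<inter> satisfied ds a \<noteq> {}" using assms(1,3,5) unfolding nodes_hit_def by blast
  then have "x \<in> satisfied ds a" using assms(4,6) by auto
  then have "{a \<in> A ds. clauses g \<subseteq> satisfied ds a} \<subset> {a \<in> A ds. x \<in> satisfied ds a}"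
    using assms(4-6) by blast
  then have "card {a \<in> A ds. clauses g \<subseteq> satisfied ds a} < card {a \<in> A ds. x \<in> satisfied ds a}"
    by (simp add: psubset_card_mono finite_nodes)
  moreover have "level g \<le> card {a \<in> A ds. clauses g \<subseteq> satisfied ds a}"
    using assms(2,3) by (simp add: levels_supported_def)
  ultimately show ?thesis by linarith
qed

lemma level_lt_width:
  assumes "adversary_state ds G S X" "g \<in> G" "\<not> unanimous ds g"
  shows "level g < k"
proof -
  obtain a where "a \<in> A ds" "right g \<notin> satisfied ds a" using assms(3) by (auto simp: unanimous_def)
  with assms(1,2) have "level g < card {a \<in> A ds. left g \<in> satisfied ds a}"
    by (intro level_lt_card_nodes_satisfying) (auto simp: adversary_state_def)
  also have "\<dots> \<le> card (A ds)" by (simp add: card_mono finite_nodes)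
  finally show ?thesis using card_nodes_le[of ds] by linarith
qed

section \<open>Joining four gadgets\<close>

context
  fixes ds G S X o1 o2 o3 o4
  assumes state: "adversary_state ds G S X"
    and joined: "{o1, o2, o3, o4} \<subseteq> G" "distinct [o1, o2, o3, o4]"
    and same_profile: "profile ds o2 = profile ds o1" "profile ds o3 = profile ds o1" "profile ds o4 = profile ds o1"
    and not_unanimous: "\<not> unanimous ds o1"
begin

lemma join_well_formed: "well_formed S ds G"
  using state by (simp add: adversary_state_def)

lemma join_clauses_disjoint:
  "g \<in> {o1, o2, o3, o4} \<Longrightarrow> h \<in> G \<Longrightarrow> g \<noteq> h \<Longrightarrow> clauses g \<inter> clauses h = {}"
  using join_well_formed joined(1) by (auto simp: well_formed_def dest: disjoint_family_onD)

lemma join_new_clauses_distinct: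
  "left o1 \<noteq> left o2" "right o3 \<noteq> right o4" "{left o1, left o2} \<inter> {right o3, right o4} = {}"
  using join_clauses_disjoint[of o1 o2] join_clauses_disjoint[of o3 o4]
    join_clauses_disjoint[of o1 o3] join_clauses_disjoint[of o1 o4]
    join_clauses_disjoint[of o2 o3] join_clauses_disjoint[of o2 o4] joined by auto

lemma join_twins:
  assumes "g \<in> {o1, o2, o3, o4}" and "a \<in> A ds"
  shows "level g = level o1" "left g \<in> satisfied ds a \<longleftrightarrow> left o1 \<in> satisfied ds a"
    "right g \<in> satisfied ds a \<longleftrightarrow> right o1 \<in> satisfied ds a"
  using assms profile_eqD[OF same_profile(1)] profile_eqD[OF same_profile(2)] profile_eqD[OF same_profile(3)] by auto

lemma well_formed_join:
  "well_formed S (ds @ join_items o1 o2 o3 o4)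
     (G - {o1, o2, o3, o4} \<union> {join_left o1 o2, join_right o3 o4})"
proof -
  have "disjoint_family_on clauses {join_left o1 o2, join_right o3 o4}"
    using join_new_clauses_distinct by (auto simp: disjoint_family_on_def)
  then have "disjoint_family_on clauses (G - {o1, o2, o3, o4} \<union> {join_left o1 o2, join_right o3 o4})"
    using join_well_formed joined(1) by (intro disjoint_family_on_replace) (auto simp: well_formed_def)
  then show ?thesis
    using join_well_formed joined(1) join_new_clauses_distinct by (auto simp: well_formed_def)
qed

lemma optimum_witness_join:
  "optimum_witness S (ds @ join_items o1 o2 o3 o4)
     (G - {o1, o2, o3, o4} \<union> {join_left o1 o2, join_right o3 o4})"
  unfolding optimum_witness_def
proof
  fix f
  let ?Q = "{o1, o2, o3, o4}" and ?N = "{join_left o1 o2, join_right o3 o4}"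
    and ?P = "{left o1, left o2, right o3, right o4}"
    and ?b = "[\<not> f (join_left o1 o2), \<not> f (join_right o3 o4)]"
  define f' where "f' g = (if g \<in> {o1, o2} then True else if g \<in> {o3, o4} then False else f g)" for g
  obtain \<sigma> where \<sigma>: "length \<sigma> = length ds" "{..<2*S} - side f' ` G \<subseteq> satisfied ds \<sigma>"
    using state unfolding adversary_state_def optimum_witness_def by blast
  have old: "g \<in> ?Q \<Longrightarrow> side f' g \<in> ?P" "g \<notin> ?Q \<Longrightarrow> side f' g = side f g" for g
    by (auto simp: side_def f'_def)
  have new: "?P - side f ` ?N \<subseteq> satisfied (join_items o1 o2 o3 o4) ?b"
    using join_new_clauses_distinct by (auto simp: side_def)
  have "{..<2*S} - side f ` (G - ?Q \<union> ?N) \<subseteq> satisfied ds \<sigma> \<union> satisfied (join_items o1 o2 o3 o4) ?b"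
  proof
    fix c assume c: "c \<in> {..<2*S} - side f ` (G - ?Q \<union> ?N)"
    show "c \<in> satisfied ds \<sigma> \<union> satisfied (join_items o1 o2 o3 o4) ?b"
    proof (cases "c \<in> side f' ` G")
      case True
      then obtain g where "g \<in> G" "c = side f' g" by blast
      then have "c \<in> ?P - side f ` ?N" using old[of g] c by (cases "g \<in> ?Q") auto
      then show ?thesis using new by blast
    next
      case False
      then show ?thesis using \<sigma>(2) c by blast
    qed
  qed
  then show "\<exists>\<sigma>'. length \<sigma>' = length (ds @ join_items o1 o2 o3 o4) \<and>
      {..<2*S} - side f ` (G - ?Q \<union> ?N) \<subseteq> satisfied (ds @ join_items o1 o2 o3 o4) \<sigma>'"
    using \<sigma>(1) by (intro exI[of _ "\<sigma> @ ?b"]) (simp add: satisfied_append)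
qed

lemma levels_supported_join:
  "levels_supported (ds @ join_items o1 o2 o3 o4)
     (G - {o1, o2, o3, o4} \<union> {join_left o1 o2, join_right o3 o4})"
proof -
  let ?ds' = "ds @ join_items o1 o2 o3 o4"
  have hit: "nodes_hit ds G" and levels: "levels_supported ds G"
    using state by (auto simp: adversary_state_def)
  have lift: "card {a \<in> A ds. x \<in> satisfied ds a} \<le> card {a' \<in> A ?ds'. clauses g \<subseteq> satisfied ?ds' a'}"
    if "\<And>a. a \<in> A ds \<Longrightarrow> x \<in> satisfied ds a \<Longrightarrow> clauses g \<subseteq> satisfied ds a" for x g
  proof (rule card_nodes_le_card_extensions)
    fix a b assume "a \<in> A ds" "x \<in> satisfied ds a"
    then show "clauses g \<subseteq> satisfied ?ds' (a @ b)"
      using that satisfied_append[OF length_node[OF \<open>a \<in> A ds\<close>]] by blast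
  qed
  obtain a1 where a1: "a1 \<in> A ds" "right o1 \<notin> satisfied ds a1"
    using not_unanimous by (auto simp: unanimous_def)
  obtain a2 where a2: "a2 \<in> A ds" "left o1 \<notin> satisfied ds a2"
    using not_unanimous by (auto simp: unanimous_def)
  have "level o1 < card {a \<in> A ds. left o1 \<in> satisfied ds a}"
    using level_lt_card_nodes_satisfying[OF hit levels _ _ a1] joined(1) by simp
  also have "\<dots> \<le> card {a' \<in> A ?ds'. clauses (join_left o1 o2) \<subseteq> satisfied ?ds' a'}"
    by (rule lift) (use join_twins[of o2] in simp)
  finally have new_left: "level (join_left o1 o2) \<le> \<dots>" by simp
  have "level o1 < card {a \<in> A ds. right o1 \<in> satisfied ds a}"
    using level_lt_card_nodes_satisfying[OF hit levels _ _ a2] joined(1) by (simp add: insert_commute)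
  also have "\<dots> \<le> card {a' \<in> A ?ds'. clauses (join_right o3 o4) \<subseteq> satisfied ?ds' a'}"
    by (rule lift) (use join_twins[of o3] join_twins[of o4] in simp)
  finally have new_right: "level (join_right o3 o4) \<le> \<dots>" using join_twins(1)[of o3] a1(1) by simp
  show ?thesis
    using levels_supported_append[OF levels Diff_subset, where es = "join_items o1 o2 o3 o4"]
      new_left new_right
    by (auto simp: levels_supported_def)
qed

lemma join_new_gadgets_fresh:
  "join_left o1 o2 \<notin> G" "join_right o3 o4 \<notin> G" "join_left o1 o2 \<noteq> join_right o3 o4"
proof -
  have "join_left o1 o2 \<noteq> o1" "join_right o3 o4 \<noteq> o3"
    by (metis gadget.sel(1) n_not_Suc_n)+
  then show "join_left o1 o2 \<notin> G" "join_right o3 o4 \<notin> G"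
    using join_clauses_disjoint[of o1 "join_left o1 o2"] join_clauses_disjoint[of o3 "join_right o3 o4"]
    by auto
  show "join_left o1 o2 \<noteq> join_right o3 o4"
    using join_new_clauses_distinct(3) by auto
qed

lemma join_credit_exchange:
  assumes "a \<in> A ds" and C: "C = satisfied ds a"
    and C': "C' = C \<union> satisfied (join_items o1 o2 o3 o4) [b1, b2]"
  shows "card C' + gadget_credit k C' (join_left o1 o2) + gadget_credit k C' (join_right o3 o4)
    \<le> card C + 4 * gadget_credit k C o1"
proof -
  let ?x1 = "if b1 then left o1 else left o2" and ?x2 = "if b2 then right o3 else right o4"
  have C'_eq: "C' = insert ?x1 (insert ?x2 C)" using C' by auto
  have "finite C" using finite_subset[OF well_formed_satisfied[OF join_well_formed]] C by simp
  have "level o1 < k"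
    using level_lt_width[OF state _ not_unanimous] joined(1) by simp
  then have rate: "4 * credit k (level o1) = 1 + credit k (Suc (level o1))"
    by (rule credit_Suc)
  have tw: "left o2 \<in> C \<longleftrightarrow> left o1 \<in> C" "right o3 \<in> C \<longleftrightarrow> right o1 \<in> C"
    "right o4 \<in> C \<longleftrightarrow> right o1 \<in> C" "level o3 = level o1"
    using join_twins[of o2 a] join_twins[of o3 a] join_twins[of o4 a] assms(1) C by simp_all
  have "clauses o1 \<inter> C \<noteq> {}"
    using state assms(1) joined(1) C by (auto simp: adversary_state_def nodes_hit_def)
  then consider "left o1 \<in> C" "right o1 \<notin> C" | "left o1 \<notin> C" "right o1 \<in> C"
    | "left o1 \<in> C" "right o1 \<in> C" by auto
  then show ?thesis
  proof cases
    case 1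
    then have "C' = insert ?x2 C" "?x2 \<notin> C" using C'_eq tw by auto
    then have "card C' = Suc (card C)" using \<open>finite C\<close> by simp
    moreover have "gadget_credit k C' (join_left o1 o2) = 0"
      using 1 tw \<open>C' = insert ?x2 C\<close> by (simp add: gadget_credit_def)
    moreover have "gadget_credit k C' (join_right o3 o4) = credit k (Suc (level o1))"
      using 1 tw \<open>C' = insert ?x2 C\<close> join_new_clauses_distinct(2) by (auto simp: gadget_credit_def)
    moreover have "gadget_credit k C o1 = credit k (level o1)"
      using 1 by (simp add: gadget_credit_def)
    ultimately show ?thesis using rate by simp
  next
    case 2
    then have "C' = insert ?x1 C" "?x1 \<notin> C" using C'_eq tw by auto
    then have "card C' = Suc (card C)" using \<open>finite C\<close> by simp
    moreover have "gadget_credit k C' (join_right o3 o4) = 0"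
      using 2 tw \<open>C' = insert ?x1 C\<close> by (simp add: gadget_credit_def)
    moreover have "gadget_credit k C' (join_left o1 o2) = credit k (Suc (level o1))"
      using 2 tw \<open>C' = insert ?x1 C\<close> join_new_clauses_distinct(1) by (auto simp: gadget_credit_def)
    moreover have "gadget_credit k C o1 = credit k (level o1)"
      using 2 by (simp add: gadget_credit_def)
    ultimately show ?thesis using rate by simp
  next
    case 3
    then have "C' = C" using C'_eq tw by auto
    then show ?thesis using 3 tw by (simp add: gadget_credit_def credit_nonneg)
  qed
qed

lemma potential_bounded_join:
  "potential_bounded (ds @ join_items o1 o2 o3 o4)
     (G - {o1, o2, o3, o4} \<union> {join_left o1 o2, join_right o3 o4}) S X"
  unfolding potential_bounded_def
proof
  let ?Q = "{o1, o2, o3, o4}" and ?n1 = "join_left o1 o2" and ?n2 = "join_right o3 o4"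
  fix a' assume "a' \<in> A (ds @ join_items o1 o2 o3 o4)"
  then obtain a b where a: "a \<in> A ds" and "length b = length (join_items o1 o2 o3 o4)" and
    sat: "satisfied (ds @ join_items o1 o2 o3 o4) a' = satisfied ds a \<union> satisfied (join_items o1 o2 o3 o4) b"
    by (rule node_append_cases)
  then obtain b1 b2 where b: "b = [b1, b2]" by (auto simp: length_Suc_conv)
  define C where "C = satisfied ds a"
  define C' where "C' = C \<union> satisfied (join_items o1 o2 o3 o4) [b1, b2]"
  have "finite G" using join_well_formed by (simp add: well_formed_def)
  have "\<forall>h\<in>G - ?Q. clauses h \<inter> satisfied (join_items o1 o2 o3 o4) [b1, b2] = {}"
    using join_clauses_disjoint by auto
  then have kept: "(\<Sum>h\<in>G - ?Q. gadget_credit k C' h) = (\<Sum>h\<in>G - ?Q. gadget_credit k C h)"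
    unfolding C'_def by (rule sum_gadget_credit_fresh)
  have "gadget_credit k C o2 = gadget_credit k C o1" "gadget_credit k C o3 = gadget_credit k C o1"
    "gadget_credit k C o4 = gadget_credit k C o1"
    using join_twins[of o2 a] join_twins[of o3 a] join_twins[of o4 a] a
    by (simp_all add: gadget_credit_def C_def)
  then have "(\<Sum>h\<in>?Q. gadget_credit k C h) = 4 * gadget_credit k C o1"
    using joined(2) by simp
  then have old: "(\<Sum>h\<in>G. gadget_credit k C h) = (\<Sum>h\<in>G - ?Q. gadget_credit k C h) + 4 * gadget_credit k C o1"
    using sum.subset_diff[OF joined(1) \<open>finite G\<close>, of "gadget_credit k C"] by simp
  have "potential k C' (G - ?Q \<union> {?n1, ?n2})
      = card C' + (\<Sum>h\<in>G - ?Q. gadget_credit k C' h) + gadget_credit k C' ?n1 + gadget_credit k C' ?n2"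
    using join_new_gadgets_fresh \<open>finite G\<close> by (simp add: potential_def)
  also have "\<dots> \<le> potential k C G"
    using join_credit_exchange[OF a C_def C'_def] kept old by (simp add: potential_def)
  also have "\<dots> \<le> (1 + credit k 0) * S + X"
    using state a by (simp add: adversary_state_def potential_bounded_def C_def)
  finally show "potential k (satisfied (ds @ join_items o1 o2 o3 o4) a') (G - ?Q \<union> {?n1, ?n2})
      \<le> (1 + credit k 0) * S + X"
    using sat b by (simp add: C'_def C_def)
qed

lemma adversary_state_join:
  "adversary_state (ds @ join_items o1 o2 o3 o4)
     (G - {o1, o2, o3, o4} \<union> {join_left o1 o2, join_right o3 o4}) S X"
proof -
  let ?ds' = "ds @ join_items o1 o2 o3 o4"
  have "nodes_hit ds G" using state by (simp add: adversary_state_def)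
  then have "nodes_hit ?ds' (G - {o1, o2, o3, o4})" by (rule nodes_hit_append) blast
  moreover have "nodes_hit ?ds' {join_left o1 o2}" "nodes_hit ?ds' {join_right o3 o4}"
    by (rule nodes_hit_pair_item, simp)+
  ultimately have "nodes_hit ?ds' (G - {o1, o2, o3, o4} \<union> {join_left o1 o2, join_right o3 o4})"
    by (auto simp: nodes_hit_def)
  then show ?thesis
    unfolding adversary_state_def
    using well_formed_join optimum_witness_join levels_supported_join potential_bounded_join
    by (intro conjI)
qed

end

section \<open>The bad instance\<close>

definition normal :: "item list \<Rightarrow> gadget set \<Rightarrow> bool" where
  "normal ds G \<longleftrightarrow>
     (\<forall>g\<in>G. \<not> unanimous ds g) \<and> (\<forall>g\<in>G. card {h \<in> G. profile ds h = profile ds g} \<le> 3)"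

lemma adversary_state_normalize:
  "adversary_state ds G S X \<Longrightarrow> \<exists>ds' G'. adversary_state ds' G' S X \<and> normal ds' G'"
proof (induction "card G" arbitrary: ds G rule: less_induct)
  case less
  have "finite G" using less.prems by (simp add: adversary_state_def well_formed_def)
  show ?case
  proof (cases "\<exists>g\<in>G. unanimous ds g")
    case True
    then obtain g x where g: "g \<in> G" "x \<in> clauses g" "\<forall>a\<in>A ds. x \<in> satisfied ds a"
      by (auto simp: unanimous_def)
    then have "adversary_state (ds @ [({x}, {})]) (G - {g}) S X"
      by (intro adversary_state_close[OF less.prems]) auto
    moreover have "card (G - {g}) < card G" using \<open>finite G\<close> g(1) by (rule card_Diff1_less)
    ultimately show ?thesis using less.hyps by blast
  next
    case no_unanimous: False
    show ?thesis
    proof (cases "\<exists>g\<in>G. 4 \<le> card {h \<in> G. profile ds h = profile ds g}")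
      case True
      then obtain g where "4 \<le> card {h \<in> G. profile ds h = profile ds g}" by blast
      then obtain o1 o2 o3 o4 where os: "{o1, o2, o3, o4} \<subseteq> {h \<in> G. profile ds h = profile ds g}"
        and distinct: "distinct [o1, o2, o3, o4]"
        by (rule card_ge_4_obtain_distinct)
      let ?G' = "G - {o1, o2, o3, o4} \<union> {join_left o1 o2, join_right o3 o4}"
      have "adversary_state (ds @ join_items o1 o2 o3 o4) ?G' S X"
        using os distinct no_unanimous by (intro adversary_state_join[OF less.prems]) auto
      moreover have "card ?G' < card G"
        using os distinct \<open>finite G\<close> by (intro card_Diff_Un_less) (auto simp: card_insert_if)
      ultimately show ?thesis using less.hyps by blast
    next
      case False
      then have "normal ds G" using no_unanimous by (auto simp: normal_def)
      then show ?thesis using less.prems by blast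
    qed
  qed
qed

lemma card_gadgets_le_if_normal:
  assumes "adversary_state ds G S X" and "normal ds G"
  shows "card G \<le> 3 * (k * 4 ^ k)"
proof -
  let ?K = "{..<k} \<times> Pow (A ds) \<times> Pow (A ds)"
  have "profile ds ` G \<subseteq> ?K"
    using assms level_lt_width by (auto simp: profile_def normal_def)
  then have "card (profile ds ` G) \<le> card ?K" by (intro card_mono) (simp_all add: finite_nodes)
  also have "card ?K = k * 4 ^ card (A ds)"
    by (simp add: card_cartesian_product card_Pow finite_nodes power_mult_distrib[symmetric])
  also have "\<dots> \<le> k * 4 ^ k" by (simp add: card_nodes_le power_increasing)
  finally have "card (profile ds ` G) \<le> k * 4 ^ k" .
  moreover have "card G \<le> 3 * card (profile ds ` G)"
    using assms by (intro card_le_mult_card_image) (auto simp: adversary_state_def well_formed_def normal_def)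
  ultimately show ?thesis by linarith
qed

lemma adversary_state_alg_value_le:
  assumes "adversary_state ds {} S X"
  shows "alg_value A ds \<le> (1 + credit k 0) * S + X"
proof -
  obtain a where "a \<in> A ds" "alg_value A ds = sat_count ds a" by (rule alg_value_attained)
  with assms show ?thesis
    by (simp add: adversary_state_def potential_bounded_def potential_def sat_count_eq_card_satisfied)
qed

lemma adversary_state_opt_value_ge:
  assumes "adversary_state ds {} S X"
  shows "2 * S \<le> opt_value ds"
proof -
  obtain \<sigma> where \<sigma>: "length \<sigma> = length ds" "{..<2*S} \<subseteq> satisfied ds \<sigma>"
    using assms by (auto simp: adversary_state_def optimum_witness_def)
  have "well_formed S ds {}" using assms by (simp add: adversary_state_def)
  from well_formed_satisfied[OF this] have "finite (satisfied ds \<sigma>)"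
    by (rule finite_subset) simp
  then have "2 * S \<le> sat_count ds \<sigma>"
    using card_mono[OF _ \<sigma>(2)] by (simp add: sat_count_eq_card_satisfied)
  also have "\<dots> \<le> opt_value ds" using \<sigma>(1) by (rule sat_count_le_opt_value)
  finally show ?thesis .
qed

lemma instance_with_ratio_gap:
  obtains ds where "valid_instance ds" "0 < opt_value ds" "ratio A ds \<le> 2/3 - 1 / (12 * 4 ^ k)"
proof -
  define K :: nat where "K = 3 * (k * 4 ^ k)"
  define S :: nat where "S = 6 * K * 4 ^ k"
  obtain ds0 G0 where "adversary_state ds0 G0 S 0" using adversary_state_seeds by blast
  then obtain ds1 G1 where state1: "adversary_state ds1 G1 S 0" and "normal ds1 G1"
    using adversary_state_normalize by blast
  then have "card G1 \<le> K" unfolding K_def by (rule card_gadgets_le_if_normal)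
  obtain ds where state: "adversary_state ds {} S (card G1)"
    using adversary_state_close_all[OF state1] by auto
  have "0 < K" using width_pos by (simp add: K_def)
  then have "0 < S" by (simp add: S_def)
  have opt: "2 * S \<le> opt_value ds" using state by (rule adversary_state_opt_value_ge)
  then have "0 < opt_value ds" using \<open>0 < S\<close> by linarith
  have "ratio A ds = alg_value A ds / opt_value ds"
    using \<open>0 < opt_value ds\<close> by (simp add: ratio_def)
  also have "\<dots> \<le> ((1 + credit k 0) * S + K) / (2 * S)"
    using adversary_state_alg_value_le[OF state] opt \<open>card G1 \<le> K\<close> \<open>0 < S\<close> credit_nonneg[of k 0]
    by (intro frac_le) simp_all
  also have "\<dots> = 2/3 - 1 / (12 * 4 ^ k)"
    using \<open>0 < K\<close> by (simp add: S_def credit_def field_simps)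
  finally show ?thesis
    using that state well_formed_valid_instance \<open>0 < opt_value ds\<close>
    by (auto simp: adversary_state_def)
qed

end

theorem theorem3:
  fixes k :: nat and A :: "item list \<Rightarrow> bool list set"
  assumes "width_alg k A"
  shows "asymp_ratio A < ereal (2/3)"
proof -
  interpret width_algorithm k A by standard (rule assms)
  obtain ds where ds: "valid_instance ds" "0 < opt_value ds" "ratio A ds \<le> 2/3 - 1 / (12 * 4 ^ k)"
    by (rule instance_with_ratio_gap)
  have "asymp_ratio A \<le> ereal (ratio A ds)" using ds(1,2) by (rule asymp_ratio_le_ratio)
  also have "\<dots> < ereal (2/3)"
  proof -
    have "0 < 1 / (12 * 4 ^ k :: real)" by simp
    with ds(3) have "ratio A ds < 2/3" by linarith
    then show ?thesis by simp
  qed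
  finally show ?thesis .
qed

end
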